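(* Let the data distributions $\mathcal{D}_{\mathrm{train}},\mathcal{D}_{\mathrm{test}}$, the Transformer architecture $P_\theta$, the few-shot training loss $\widehat{L}_{\mathrm{train}}(\theta)$ and the testing losses $L^k_{\mathrm{test}}(\theta)$ be as in the context. For every $\epsilon>0$ there exists a Transformer with parameters $\theta^*$ such that $\big|\widehat{L}_{\mathrm{train}}(\theta^* )-\inf_\theta\widehat{L}_{\mathrm{train}}(\theta)\big|<\epsilon$ and, for $k=2,\dots,K$, $L^k_{\mathrm{test}}(\theta^* )=-1$, i.e. $\Pr_{\mathcal{D}_{\mathrm{test}}}\big[\mathrm{dec}(\mathrm{model}_{\theta^*}(\widetilde{\mathtt{inp}}^k))=\mathrm{dec}(\widetilde{\mathtt{lab}}^k)\big]=1$ (the minimal possible testing loss).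
   Context: Causal structure: $\mathcal{V}_{\mathrm{all}}$ a finite alphabet of vertex symbols, $G=(V,E)$ a directed graph with $V\subseteq\mathcal{V}_{\mathrm{all}}$; each $v\in\mathcal{V}_{\mathrm{all}}$ has a finite value set $\mathtt{VALS}(v)\subset\mathbb{Z}$ and a finite nonempty context-token set $\mathtt{CONT}(v)$ (pairwise disjoint, disjoint from vertices and values); each edge $e=(v_1,v_2)$ carries $\mathtt{op}(e):q\mapsto q+c_e$ mapping $\mathtt{VALS}(v_1)$ into $\mathtt{VALS}(v_2)$. Chains $\mathcal{T}(G)$ are vertex lists with consecutive pairs in $E$; $N$ is the maximal chain length. Special tokens $o^{\mathrm{eq}}$ ("="), $o^{\mathrm{cm}}$ (","), $o^{\mathrm{qu}}$ ("?"), $o^{\mathrm{dlm}}$ (newline); $\mathcal{A}$ is the set of all tokens. Sequences: training sequences interleave a chain $[u_1,\dots,u_M]\in\mathcal{T}(G)$ ($M<N$) with noise vertices from $\mathcal{V}_{\mathrm{all}}\setminus V$ preserving orders; chain values start uniform in $\mathtt{VALS}(u_1)$ and follow $q(u_h)=\mathtt{op}(u_{h-1},u_h)(q(u_{h-1}))$, noise values are uniform in their $\mathtt{VALS}$. Test sequences are chains of length $N$ with values generated the same way, no noise. A sequence $[v_1,q_1,\dots,v_L,q_L]$ is processed into $[v_L,o^{\mathrm{eq}},o^{\mathrm{qu}},c(v_1)_{1..l_1},v_1,o^{\mathrm{eq}},q_1,o^{\mathrm{cm}},\dots,o^{\mathrm{cm}},c(v_L)_{1..l_L},v_L,o^{\mathrm{eq}},q_L]$,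 with $l_i\sim\mathrm{Uniform}\{1,\dots,|\mathtt{CONT}(v_i)|\}$ and the $c(v_i)_\cdot$ drawn from $\mathtt{CONT}(v_i)$ without replacement. For $k\in\{0,\dots,K\}$, a $k$-shot input $\widetilde{\mathtt{inp}}^k$ is $k$ processed sequences with the same vertex list (independent values and context tokens) separated by $o^{\mathrm{dlm}}$, then $o^{\mathrm{dlm}}$, then the prefix of a further such processed sequence up to and including its first $o^{\mathrm{cm}}$; the label $\widetilde{\mathtt{lab}}^k$ (length $d^k$) is the rest of that sequence. $\mathcal{D}_{\mathrm{train}}$/$\mathcal{D}_{\mathrm{test}}$ use training/test sequences. $\mathrm{dec}$ extracts from a processed token string the list of vertex–value pairs (vertex and value in each "vertex, $o^{\mathrm{eq}}$, value"). Transformer: embedding $x_t=W_E(z_t,t)\in\mathbb{R}^d$; layers $x^{(l)}_t=x^{(l-1)}_t+\sum_{h}W_V^{l,h}x^{(l-1)}_{1:t}\,\mathrm{softmax}\big((x^{(l-1)}_{1:t})^\top(W_K^{l,h})^\top W_Q^{l,h}x^{(l-1)}_t\big)$; output $P_\theta(\cdot\mid z_{1:T})=\mathrm{softmax}\big(W_{O_2}\mathrm{relu}(W_{O_1}x^{(L)}_T+W_B)\big)$ over $\mathcal{A}$; $\theta$ is the collection of parameters. $\mathrm{model}_\theta(z)$ is greedy decoding: repeatedly append an argmax token of $P_\theta$ given the current sentence, until the value of the goal vertex (named at the start of the current sequence) is produced. Losses: $\widehat{L}_{\mathrm{train}}(\theta)=-\mathbb{E}_{\mathcal{D}_{\mathrm{train}}}\sum_{k=1}^{K-1}\sum_{t=1}^{d^k-1}\log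 P_\theta\big(\widetilde{\mathtt{lab}}^k_{t+1}\mid\widetilde{\mathtt{inp}}^k+\widetilde{\mathtt{lab}}^k_{1:t}\big)$ and $L^k_{\mathrm{test}}(\theta)=-\Pr_{\mathcal{D}_{\mathrm{test}}}\big[\mathrm{dec}(\mathrm{model}_\theta(\widetilde{\mathtt{inp}}^k))=\mathrm{dec}(\widetilde{\mathtt{lab}}^k)\big]$. *)

theory Defs
  imports "HOL-Probability.Probability"
begin

text \<open>Vertex symbols of type 'v, context tokens of type 'c, values are integers;
  the constructors keep vertices, values, context tokens and the special tokens disjoint.\<close>
datatype ('v, 'c) token = Vert 'v | Val int | Ctx 'c | Eq | Comma | Qu | Dlm

definition is_chain :: "'v set \<Rightarrow> ('v \<times> 'v) set \<Rightarrow> 'v list \<Rightarrow> bool" where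
  "is_chain V E vs \<longleftrightarrow> vs \<noteq> [] \<and> set vs \<subseteq> V \<and>
     (\<forall>i. Suc i < length vs \<longrightarrow> (vs ! i, vs ! Suc i) \<in> E)"

definition chains :: "'v set \<Rightarrow> ('v \<times> 'v) set \<Rightarrow> 'v list set" where
  "chains V E = {vs. is_chain V E vs}"

definition maxlen :: "'v set \<Rightarrow> ('v \<times> 'v) set \<Rightarrow> nat" where
  "maxlen V E = Max (length ` chains V E)"

definition valid_structure ::
  "'v set \<Rightarrow> 'v set \<Rightarrow> ('v \<times> 'v) set \<Rightarrow> ('v \<Rightarrow> int set) \<Rightarrow> ('v \<Rightarrow> 'c set)
   \<Rightarrow> ('v \<times> 'v \<Rightarrow> int) \<Rightarrow> bool" where
  "valid_structure Vall V E VALS CONT c \<longleftrightarrow>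
     finite Vall \<and> V \<subseteq> Vall \<and> E \<subseteq> V \<times> V \<and>
     (\<forall>v\<in>Vall. finite (VALS v) \<and> VALS v \<noteq> {}) \<and>
     (\<forall>v\<in>Vall. finite (CONT v) \<and> CONT v \<noteq> {}) \<and>
     (\<forall>v\<in>Vall. \<forall>w\<in>Vall. v \<noteq> w \<longrightarrow> CONT v \<inter> CONT w = {}) \<and>
     (\<forall>e\<in>E. \<forall>q\<in>VALS (fst e). q + c e \<in> VALS (snd e)) \<and>
     finite (chains V E)"

text \<open>Training vertex lists: a chain of length M < N interleaved (order preserving)
  with noise vertices from Vall - V.  Since chain vertices lie in V and noise vertices
  do not, the chain is recovered as the sublist of vertices in V.\<close>
definition train_list :: "'v set \<Rightarrow> 'v set \<Rightarrow> ('v \<times> 'v) set \<Rightarrow> 'v list \<Rightarrow> bool" where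
  "train_list Vall V E vs \<longleftrightarrow> set vs \<subseteq> Vall \<and>
     is_chain V E (filter (\<lambda>v. v \<in> V) vs) \<and>
     length (filter (\<lambda>v. v \<in> V) vs) < maxlen V E"

definition test_list :: "'v set \<Rightarrow> ('v \<times> 'v) set \<Rightarrow> 'v list \<Rightarrow> bool" where
  "test_list V E vs \<longleftrightarrow> is_chain V E vs \<and> length vs = maxlen V E"

fun seq_pmf :: "'a pmf list \<Rightarrow> 'a list pmf" where
  "seq_pmf [] = return_pmf []"
| "seq_pmf (p # ps) = bind_pmf p (\<lambda>x. map_pmf (Cons x) (seq_pmf ps))"

text \<open>The argument prev records the previous chain vertex and its value.\<close>
fun gen_vals :: "('v \<Rightarrow> int set) \<Rightarrow> ('v \<times> 'v \<Rightarrow> int) \<Rightarrow> 'v set \<Rightarrow> ('v \<times> int) option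
                  \<Rightarrow> 'v list \<Rightarrow> int list pmf" where
  "gen_vals VALS c V prev [] = return_pmf []"
| "gen_vals VALS c V prev (v # vs) =
     (if v \<in> V then
        bind_pmf (case prev of None \<Rightarrow> pmf_of_set (VALS v)
                             | Some (u, q) \<Rightarrow> return_pmf (q + c (u, v)))
          (\<lambda>q. map_pmf (Cons q) (gen_vals VALS c V (Some (v, q)) vs))
      else
        bind_pmf (pmf_of_set (VALS v))
          (\<lambda>q. map_pmf (Cons q) (gen_vals VALS c V prev vs)))"

text \<open>Context tokens: l uniform in 1..|CONT v|, then l tokens drawn without replacement,
  i.e. a uniformly random list of l distinct elements of CONT v.\<close>
definition ctx_pmf :: "('v \<Rightarrow> 'c set) \<Rightarrow> 'v \<Rightarrow> 'c list pmf" where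
  "ctx_pmf CONT v =
     bind_pmf (pmf_of_set {1..card (CONT v)})
       (\<lambda>l. pmf_of_set {xs. distinct xs \<and> set xs \<subseteq> CONT v \<and> length xs = l})"

fun join_comma :: "('v, 'c) token list list \<Rightarrow> ('v, 'c) token list" where
  "join_comma [] = []"
| "join_comma [b] = b"
| "join_comma (b # bs) = b @ [Comma] @ join_comma bs"

definition process :: "'v list \<Rightarrow> int list \<Rightarrow> 'c list list \<Rightarrow> ('v, 'c) token list" where
  "process vs qs cs =
     [Vert (last vs), Eq, Qu] @
     join_comma (map (\<lambda>((v, q), cv). map Ctx cv @ [Vert v, Eq, Val q]) (zip (zip vs qs) cs))"

definition proc_pmf :: "('v \<Rightarrow> int set) \<Rightarrow> ('v \<Rightarrow> 'c set) \<Rightarrow> ('v \<times> 'v \<Rightarrow> int) \<Rightarrow> 'v set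
                         \<Rightarrow> 'v list \<Rightarrow> ('v, 'c) token list pmf" where
  "proc_pmf VALS CONT c V vs =
     bind_pmf (gen_vals VALS c V None vs) (\<lambda>qs.
       map_pmf (process vs qs) (seq_pmf (map (ctx_pmf CONT) vs)))"

definition split_comma :: "('v, 'c) token list \<Rightarrow> ('v, 'c) token list \<times> ('v, 'c) token list" where
  "split_comma s =
     (if Comma \<in> set s then (takeWhile (\<lambda>x. x \<noteq> Comma) s @ [Comma], tl (dropWhile (\<lambda>x. x \<noteq> Comma) s))
      else (s, []))"

definition mk_kshot :: "('v, 'c) token list list \<Rightarrow> ('v, 'c) token list
                        \<Rightarrow> ('v, 'c) token list \<times> ('v, 'c) token list" where
  "mk_kshot shots s = (concat (map (\<lambda>x. x @ [Dlm]) shots) @ fst (split_comma s), snd (split_comma s))"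

definition kshot_pmf :: "('v \<Rightarrow> int set) \<Rightarrow> ('v \<Rightarrow> 'c set) \<Rightarrow> ('v \<times> 'v \<Rightarrow> int) \<Rightarrow> 'v set
                         \<Rightarrow> nat \<Rightarrow> 'v list \<Rightarrow> (('v, 'c) token list \<times> ('v, 'c) token list) pmf" where
  "kshot_pmf VALS CONT c V k vs =
     map_pmf (\<lambda>ss. mk_kshot (take k ss) (ss ! k))
       (seq_pmf (replicate (Suc k) (proc_pmf VALS CONT c V vs)))"

definition data_pmf :: "('v \<Rightarrow> int set) \<Rightarrow> ('v \<Rightarrow> 'c set) \<Rightarrow> ('v \<times> 'v \<Rightarrow> int) \<Rightarrow> 'v set
                        \<Rightarrow> 'v list pmf \<Rightarrow> nat \<Rightarrow> (('v, 'c) token list \<times> ('v, 'c) token list) pmf" where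
  "data_pmf VALS CONT c V Dv k = bind_pmf Dv (kshot_pmf VALS CONT c V k)"

definition alphabet :: "'v set \<Rightarrow> ('v \<Rightarrow> int set) \<Rightarrow> ('v \<Rightarrow> 'c set) \<Rightarrow> ('v, 'c) token set" where
  "alphabet Vall VALS CONT =
     Vert ` Vall \<union> Val ` (\<Union>v\<in>Vall. VALS v) \<union> Ctx ` (\<Union>v\<in>Vall. CONT v) \<union> {Eq, Comma, Qu, Dlm}"

fun dec :: "('v, 'c) token list \<Rightarrow> ('v \<times> int) list" where
  "dec (Vert v # Eq # Val q # rest) = (v, q) # dec rest"
| "dec (x # rest) = dec rest"
| "dec [] = []"

text \<open>Vectors are nat => real (coordinates below the relevant dimension matter);
  matrices are nat => nat => real.  Layer/head indexed matrices take layer l and head h first.\<close>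
record ('v, 'c) tparams =
  dim :: nat
  nlayers :: nat
  nheads :: nat
  kdim :: nat
  hdim :: nat
  WE :: "('v, 'c) token \<Rightarrow> nat \<Rightarrow> nat \<Rightarrow> real"
  WQ :: "nat \<Rightarrow> nat \<Rightarrow> nat \<Rightarrow> nat \<Rightarrow> real"
  WK :: "nat \<Rightarrow> nat \<Rightarrow> nat \<Rightarrow> nat \<Rightarrow> real"
  WV :: "nat \<Rightarrow> nat \<Rightarrow> nat \<Rightarrow> nat \<Rightarrow> real"
  WO1 :: "nat \<Rightarrow> nat \<Rightarrow> real"
  WB :: "nat \<Rightarrow> real"
  WO2 :: "('v, 'c) token \<Rightarrow> nat \<Rightarrow> real"

definition dotp :: "nat \<Rightarrow> (nat \<Rightarrow> real) \<Rightarrow> (nat \<Rightarrow> real) \<Rightarrow> real" where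
  "dotp n x y = (\<Sum>i<n. x i * y i)"

definition matv :: "nat \<Rightarrow> (nat \<Rightarrow> nat \<Rightarrow> real) \<Rightarrow> (nat \<Rightarrow> real) \<Rightarrow> nat \<Rightarrow> real" where
  "matv n M x = (\<lambda>i. \<Sum>j<n. M i j * x j)"

definition embed :: "('v, 'c) tparams \<Rightarrow> ('v, 'c) token list \<Rightarrow> (nat \<Rightarrow> real) list" where
  "embed \<theta> zs = map (\<lambda>t. WE \<theta> (zs ! t) t) [0..<length zs]"

definition attn_score :: "('v, 'c) tparams \<Rightarrow> nat \<Rightarrow> nat \<Rightarrow> (nat \<Rightarrow> real) list \<Rightarrow> nat \<Rightarrow> nat \<Rightarrow> real" where
  "attn_score \<theta> l h xs s t =
     dotp (kdim \<theta>) (matv (dim \<theta>) (WK \<theta> l h) (xs ! s)) (matv (dim \<theta>) (WQ \<theta> l h) (xs ! t))"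

definition layer :: "('v, 'c) tparams \<Rightarrow> nat \<Rightarrow> (nat \<Rightarrow> real) list \<Rightarrow> (nat \<Rightarrow> real) list" where
  "layer \<theta> l xs = map (\<lambda>t. \<lambda>i. (xs ! t) i +
      (\<Sum>h<nheads \<theta>. \<Sum>s\<le>t.
         (exp (attn_score \<theta> l h xs s t) / (\<Sum>s'\<le>t. exp (attn_score \<theta> l h xs s' t)))
         * matv (dim \<theta>) (WV \<theta> l h) (xs ! s) i))
    [0..<length xs]"

definition forward :: "('v, 'c) tparams \<Rightarrow> ('v, 'c) token list \<Rightarrow> (nat \<Rightarrow> real) list" where
  "forward \<theta> zs = fold (layer \<theta>) [0..<nlayers \<theta>] (embed \<theta> zs)"

definition logit :: "('v, 'c) tparams \<Rightarrow> ('v, 'c) token list \<Rightarrow> ('v, 'c) token \<Rightarrow> real" where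
  "logit \<theta> zs a = (\<Sum>i<hdim \<theta>. WO2 \<theta> a i *
      max 0 ((\<Sum>j<dim \<theta>. WO1 \<theta> i j * last (forward \<theta> zs) j) + WB \<theta> i))"

definition Pmodel :: "('v, 'c) token set \<Rightarrow> ('v, 'c) tparams \<Rightarrow> ('v, 'c) token list
                      \<Rightarrow> ('v, 'c) token \<Rightarrow> real" where
  "Pmodel A \<theta> zs a = exp (logit \<theta> zs a) / (\<Sum>b\<in>A. exp (logit \<theta> zs b))"

definition seq_loss :: "('v, 'c) token set \<Rightarrow> ('v, 'c) tparams \<Rightarrow> ('v, 'c) token list
                        \<Rightarrow> ('v, 'c) token list \<Rightarrow> real" where
  "seq_loss A \<theta> inp lab = (\<Sum>t\<in>{1..<length lab}. - ln (Pmodel A \<theta> (inp @ take t lab) (lab ! t)))"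

definition train_loss :: "'v set \<Rightarrow> ('v \<Rightarrow> int set) \<Rightarrow> ('v \<Rightarrow> 'c set) \<Rightarrow> ('v \<times> 'v \<Rightarrow> int) \<Rightarrow> 'v set
                          \<Rightarrow> nat \<Rightarrow> 'v list pmf \<Rightarrow> ('v, 'c) tparams \<Rightarrow> real" where
  "train_loss Vall VALS CONT c V K Dtr \<theta> =
     (\<Sum>k\<in>{1..<K}. measure_pmf.expectation (data_pmf VALS CONT c V Dtr k)
        (\<lambda>(inp, lab). seq_loss (alphabet Vall VALS CONT) \<theta> inp lab))"

text \<open>The goal vertex token is the first token of the current sequence
  (after the last delimiter) of the input; generation stops as soon as the sentence ends
  with goal, "=", value.  greedy_run records every possible run (any argmax choice).\<close>
definition cur_seq :: "('v, 'c) token list \<Rightarrow> ('v, 'c) token list" where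
  "cur_seq z = rev (takeWhile (\<lambda>x. x \<noteq> Dlm) (rev z))"

definition stops :: "('v, 'c) token list \<Rightarrow> ('v, 'c) token list \<Rightarrow> bool" where
  "stops z out \<longleftrightarrow> (\<exists>pre q. z @ out = pre @ [hd (cur_seq z), Eq, Val q])"

definition is_argmax :: "('v, 'c) token set \<Rightarrow> (('v, 'c) token \<Rightarrow> real) \<Rightarrow> ('v, 'c) token \<Rightarrow> bool" where
  "is_argmax A p a \<longleftrightarrow> a \<in> A \<and> (\<forall>b\<in>A. p b \<le> p a)"

definition greedy_run :: "('v, 'c) token set \<Rightarrow> ('v, 'c) tparams \<Rightarrow> ('v, 'c) token list
                          \<Rightarrow> ('v, 'c) token list \<Rightarrow> bool" where
  "greedy_run A \<theta> z out \<longleftrightarrow>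
     (\<forall>i<length out. is_argmax A (Pmodel A \<theta> (z @ take i out)) (out ! i)) \<and>
     stops z out \<and> (\<forall>i<length out. \<not> stops z (take i out))"

text \<open>Event that model_theta(inp) is defined (greedy decoding terminates) and decodes to dec(lab),
  whichever argmax is chosen at each step.\<close>
definition test_correct :: "('v, 'c) token set \<Rightarrow> ('v, 'c) tparams \<Rightarrow> ('v, 'c) token list
                            \<Rightarrow> ('v, 'c) token list \<Rightarrow> bool" where
  "test_correct A \<theta> inp lab \<longleftrightarrow>
     (\<exists>out. greedy_run A \<theta> inp out) \<and> (\<forall>out. greedy_run A \<theta> inp out \<longrightarrow> dec out = dec lab)"

definition test_loss :: "'v set \<Rightarrow> ('v \<Rightarrow> int set) \<Rightarrow> ('v \<Rightarrow> 'c set) \<Rightarrow> ('v \<times> 'v \<Rightarrow> int) \<Rightarrow> 'v set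
                          \<Rightarrow> 'v list pmf \<Rightarrow> nat \<Rightarrow> ('v, 'c) tparams \<Rightarrow> real" where
  "test_loss Vall VALS CONT c V Dte k \<theta> =
     - measure_pmf.prob (data_pmf VALS CONT c V Dte k)
         {(inp, lab). test_correct (alphabet Vall VALS CONT) \<theta> inp lab}"

end

(*
  Both losses consult the model only on finitely many token strings: the training loss on the
  prefixes of training labels, greedy decoding of a test input on the prefixes of its correct
  completion.  These two sets are disjoint: the first shot of such a string names its vertex
  list, and training chains are shorter than the maximal chains used for testing.

  A one-layer Transformer realises arbitrary logits on a finite set of nonempty strings:
  uniform attention maps the strings injectively to reals, and a hidden ReLU layer made of
  tent functions interpolates arbitrary values at finitely many reals.  So take parameters
  whose training loss is within epsilon of the infimum, copy their logits on the training
  strings, and make the correct next token the unique argmax on the test strings.  Greedy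
  decoding then writes the label without its context tokens, which decodes to the same pairs,
  and it stops exactly at the end, because a maximal chain visits the goal vertex only last.
*)

theory Submission
  imports Defs "HOL-Library.Nat_Bijection"
begin

section \<open>Memorization by a one-layer Transformer\<close>

definition tent :: "real \<Rightarrow> real \<Rightarrow> real" where
  "tent d x = max 0 (x + d) - 2 * max 0 x + max 0 (x - d)"

lemma tent_0: "tent d 0 = d" if "d > 0"
  using that by (simp add: tent_def)

lemma tent_eq_0: "tent d x = 0" if "0 \<le> d" "d \<le> \<bar>x\<bar>"
  using that by (auto simp: tent_def abs_if max_def)

lemma relu_interpolation:
  fixes X :: "real set" and g :: "real \<Rightarrow> 'a \<Rightarrow> real"
  assumes "finite X"
  shows "\<exists>(n :: nat) W b. \<forall>x\<in>X. \<forall>a. (\<Sum>i<n. W a i * max 0 (x + b i)) = g x a"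
proof -
  have "\<forall>y. \<exists>\<delta>>0. \<forall>x\<in>X. x \<noteq> y \<longrightarrow> \<delta> \<le> \<bar>x - y\<bar>"
    using finite_set_avoid[OF assms] by (metis dist_real_def abs_minus_commute)
  then obtain d where d: "\<And>y. d y > 0" "\<And>x y. x \<in> X \<Longrightarrow> x \<noteq> y \<Longrightarrow> d y \<le> \<bar>x - y\<bar>"
    by metis
  obtain e where e: "bij_betw e {..<card X} X"
    using ex_bij_betw_nat_finite[OF assms] by (auto simp: atLeast0LessThan)
  \<comment> \<open>Neurons \<open>3 k\<close>, \<open>3 k + 1\<close>, \<open>3 k + 2\<close> form a tent around the point \<open>e k\<close>, narrower than
    the distance from \<open>e k\<close> to the other points of \<open>X\<close>.\<close>
  define b where "b i = [d (e (i div 3)), 0, - d (e (i div 3))] ! (i mod 3) - e (i div 3)" for i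
  define W where "W a i = [1, -2, 1] ! (i mod 3) * g (e (i div 3)) a / d (e (i div 3))" for a i
  have interpolates: "(\<Sum>i<card X * 3. W a i * max 0 (x + b i)) = g x a" if "x \<in> X" for x a
  proof -
    have "(\<Sum>i<card X * 3. W a i * max 0 (x + b i)) =
        (\<Sum>k<card X. g (e k) a / d (e k) * tent (d (e k)) (x - e k))"
      unfolding sum.nat_group[symmetric]
    proof (rule sum.cong)
      fix k :: nat
      have "{k * 3..<k * 3 + 3} = {k * 3, Suc (k * 3), Suc (Suc (k * 3))}"
        and "Suc (k * 3) div 3 = k" "Suc (Suc (k * 3)) div 3 = k"
        and "Suc (k * 3) mod 3 = 1" "Suc (Suc (k * 3)) mod 3 = 2"
        by auto presburger+
      then show "(\<Sum>i\<in>{k * 3..<k * 3 + 3}. W a i * max 0 (x + b i)) =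
          g (e k) a / d (e k) * tent (d (e k)) (x - e k)"
        by (simp add: W_def b_def tent_def algebra_simps)
    qed simp
    also have "\<dots> = (\<Sum>y\<in>X. g y a / d y * tent (d y) (x - y))"
      by (rule sum.reindex_bij_betw[OF e])
    also have "\<dots> = (\<Sum>y\<in>X. if y = x then g x a else 0)"
    proof (rule sum.cong)
      fix y assume "y \<in> X"
      show "g y a / d y * tent (d y) (x - y) = (if y = x then g x a else 0)"
        using d(1)[of y] d(2)[OF \<open>x \<in> X\<close>, of y] by (auto simp: tent_0 tent_eq_0)
    qed simp
    also have "\<dots> = g x a"
      using that assms by simp
    finally show ?thesis .
  qed
  show ?thesis
    by (intro exI[of _ "card X * 3"] exI[of _ W] exI[of _ b] ballI allI interpolates)
qed

lemma eq_mult_of_nat_add_bounded: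
  fixes \<alpha> a b :: real
  assumes "0 \<le> a" "a < \<alpha>" "0 \<le> b" "b < \<alpha>" and "\<alpha> * real m + a = \<alpha> * real m' + b"
  shows "m = m'" "a = b"
proof -
  have "\<alpha> * real m' < \<alpha> * (real m + 1)" "\<alpha> * real m < \<alpha> * (real m' + 1)"
    using assms by (simp_all add: algebra_simps)
  then have "real m' < real m + 1" "real m < real m' + 1"
    using assms by (simp_all add: mult_less_cancel_left)
  then show "m = m'" by linarith
  then show "a = b" using assms(5) by simp
qed

definition positional_code :: "('a \<Rightarrow> nat) \<Rightarrow> 'a list \<Rightarrow> nat" where
  "positional_code f z = (\<Sum>s<length z. 2 ^ prod_encode (f (z ! s), s))"

lemma positional_code_eq_set_encode:
  "positional_code f z = set_encode ((\<lambda>s. prod_encode (f (z ! s), s)) ` {..<length z})"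
proof -
  have "inj_on (\<lambda>s. prod_encode (f (z ! s), s)) {..<length z}"
    by (auto simp: inj_on_def prod_encode_eq)
  then show ?thesis
    by (simp add: positional_code_def set_encode_def sum.reindex)
qed

lemma positional_code_inj:
  assumes "inj_on f (set z \<union> set z')" "length z = length z'" "positional_code f z = positional_code f z'"
  shows "z = z'"
proof (rule nth_equalityI)
  show "length z = length z'" by fact
  have codes: "(\<lambda>s. prod_encode (f (z ! s), s)) ` {..<length z} =
      (\<lambda>s. prod_encode (f (z' ! s), s)) ` {..<length z}"
    using assms(2,3) by (simp add: positional_code_eq_set_encode set_encode_eq)
  fix s assume "s < length z"
  then have "prod_encode (f (z ! s), s) \<in> (\<lambda>s. prod_encode (f (z' ! s), s)) ` {..<length z}"
    using codes by blast
  then have "f (z ! s) = f (z' ! s)"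
    by (auto simp: prod_encode_eq)
  then show "z ! s = z' ! s"
    using assms(1,2) \<open>s < length z\<close> by (auto dest: inj_onD)
qed

lemma inj_on_positional_readout:
  assumes "\<And>z. z \<in> S \<Longrightarrow> real (positional_code f z) / real (length z) < \<alpha>"
    and "inj_on f (\<Union>(set ` S))" "[] \<notin> S"
  shows "inj_on (\<lambda>z. \<alpha> * real (length z - 1) + real (positional_code f z) / real (length z)) S"
proof (rule inj_onI)
  let ?avg = "\<lambda>z. real (positional_code f z) / real (length z)"
  fix z z' assume z: "z \<in> S" "z' \<in> S"
    and eq: "\<alpha> * real (length z - 1) + ?avg z = \<alpha> * real (length z' - 1) + ?avg z'"
  have "length z = length z'" "?avg z = ?avg z'"
    using eq_mult_of_nat_add_bounded[OF _ assms(1)[OF z(1)] _ assms(1)[OF z(2)] eq] z assms(3)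
    by (cases z; cases z'; auto)+
  then have "positional_code f z = positional_code f z'"
    using z assms(3) by (cases z) auto
  then show "z = z'"
    using positional_code_inj[of f z z'] assms(2) z \<open>length z = length z'\<close>
    by (auto intro: inj_on_subset)
qed

lemma last_forward_uniform_attention:
  assumes "nlayers \<theta> = 1" "nheads \<theta> = 1" "kdim \<theta> = 0" "z \<noteq> []"
  shows "last (forward \<theta> z) i = WE \<theta> (last z) (length z - 1) i +
    (\<Sum>s<length z. matv (dim \<theta>) (WV \<theta> 0 0) (WE \<theta> (z ! s) s) i) / length z"
proof -
  let ?n = "length z"
  have upto: "{..?n - Suc 0} = {..<?n}" and len: "1 + real (?n - Suc 0) = real ?n"
    using assms(4) by (cases ?n; auto)+
  have "forward \<theta> z = layer \<theta> 0 (embed \<theta> z)"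
    using assms(1) by (simp add: forward_def)
  then have "last (forward \<theta> z) i = WE \<theta> (z ! (?n - 1)) (?n - 1) i +
      (\<Sum>s<?n. matv (dim \<theta>) (WV \<theta> 0 0) (WE \<theta> (z ! s) s) i / ?n)"
    using assms(2-4) by (simp add: layer_def embed_def attn_score_def dotp_def last_map upto len)
  then show ?thesis
    using assms(4) by (simp add: last_conv_nth sum_divide_distrib)
qed

lemma forward_update_head [simp]:
  "forward (\<theta>\<lparr>hdim := n, WO1 := A, WB := b, WO2 := W\<rparr>) = forward \<theta>"
proof -
  have "layer (\<theta>\<lparr>hdim := n, WO1 := A, WB := b, WO2 := W\<rparr>) = layer \<theta>"
    by (intro ext) (simp add: layer_def attn_score_def)
  then show ?thesis
    by (intro ext) (simp add: forward_def embed_def)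
qed

lemma exists_injective_readout:
  fixes S :: "('v, 'c) token list set"
  assumes "finite S" "[] \<notin> S"
  shows "\<exists>(\<theta> :: ('v, 'c) tparams) w. inj_on (\<lambda>z. \<Sum>j<dim \<theta>. w j * last (forward \<theta> z) j) S"
proof -
  have "finite (\<Union>(set ` S))"
    using assms(1) by auto
  then obtain f :: "('v, 'c) token \<Rightarrow> nat" where f: "inj_on f (\<Union>(set ` S))"
    by (metis finite_imp_inj_to_nat_seg)
  define avg where "avg z = real (positional_code f z) / real (length z)" for z :: "('v, 'c) token list"
  define \<alpha> where "\<alpha> = Max (insert 0 (avg ` S)) + 1"
  have "avg z < \<alpha>" if "z \<in> S" for z
  proof -
    have "avg z \<le> Max (insert 0 (avg ` S))"
      using that assms(1) by (intro Max_ge) auto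
    then show ?thesis
      by (simp add: \<alpha>_def)
  qed
  then have inj: "inj_on (\<lambda>z. \<alpha> * real (length z - 1) + avg z) S"
    unfolding avg_def using f assms(2) by (rule inj_on_positional_readout)
  \<comment> \<open>Keys vanish, so attention is uniform: the last position receives the mean of the codes
    \<open>2 ^ prod_encode (f t, p)\<close> next to its own index \<open>length z - 1\<close>.\<close>
  define \<theta> :: "('v, 'c) tparams" where "\<theta> =
    \<lparr>dim = 3, nlayers = 1, nheads = 1, kdim = 0, hdim = 0,
     WE = \<lambda>t p j. if j = 0 then real p else if j = 1 then 2 ^ prod_encode (f t, p) else 0,
     WQ = \<lambda>_ _ _ _. 0, WK = \<lambda>_ _ _ _. 0, WV = \<lambda>_ _ i j. if i = 2 \<and> j = 1 then 1 else 0,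
     WO1 = \<lambda>_ _. 0, WB = \<lambda>_. 0, WO2 = \<lambda>_ _. 0\<rparr>"
  define w where "w j = (if j = 0 then \<alpha> else if j = 2 then 1 else 0)" for j :: nat
  have readout: "(\<Sum>j<dim \<theta>. w j * last (forward \<theta> z) j) = \<alpha> * real (length z - 1) + avg z"
    if "z \<noteq> []" for z
    using that last_forward_uniform_attention[of \<theta> z]
    by (simp add: \<theta>_def w_def avg_def positional_code_def matv_def numeral_3_eq_3)
  have "inj_on (\<lambda>z. \<Sum>j<dim \<theta>. w j * last (forward \<theta> z) j) S \<longleftrightarrow>
      inj_on (\<lambda>z. \<alpha> * real (length z - 1) + avg z) S"
    using assms(2) by (intro inj_on_cong readout) blast
  with inj show ?thesis
    by blast
qed

lemma transformer_memorization:
  fixes S :: "('v, 'c) token list set" and h :: "('v, 'c) token list \<Rightarrow> ('v, 'c) token \<Rightarrow> real"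
  assumes "finite S" "[] \<notin> S"
  shows "\<exists>\<theta> :: ('v, 'c) tparams. \<forall>z\<in>S. logit \<theta> z = h z"
proof -
  obtain \<theta>\<^sub>0 :: "('v, 'c) tparams" and w where
    inj: "inj_on (\<lambda>z. \<Sum>j<dim \<theta>\<^sub>0. w j * last (forward \<theta>\<^sub>0 z) j) S" (is "inj_on ?r S")
    using exists_injective_readout[OF assms] by blast
  have "finite (?r ` S)"
    using assms(1) by blast
  from relu_interpolation[OF this, of "\<lambda>x. h (the_inv_into S ?r x)"]
  obtain n :: nat and W b
    where interp: "\<forall>x\<in>?r ` S. \<forall>a. (\<Sum>i<n. W a i * max 0 (x + b i)) = h (the_inv_into S ?r x) a"
    by blast
  define \<theta> where "\<theta> = \<theta>\<^sub>0\<lparr>hdim := n, WO1 := \<lambda>_. w, WB := b, WO2 := W\<rparr>"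
  have "logit \<theta> z = h z" if "z \<in> S" for z
    using interp that the_inv_into_f_f[OF inj that]
    by (auto simp: logit_def \<theta>_def sum_distrib_left[symmetric])
  then show ?thesis by blast
qed

section \<open>Token strings\<close>

definition block :: "('v \<times> int) \<times> 'c list \<Rightarrow> ('v, 'c) token list" where
  "block = (\<lambda>((v, q), cv). map Ctx cv @ [Vert v, Eq, Val q])"

text \<open>The output of the constructed model: a label stripped of its context tokens, which
  \<^const>\<open>dec\<close> ignores anyway.\<close>

definition render :: "('v \<times> int) list \<Rightarrow> ('v, 'c) token list" where
  "render ps = join_comma (map (\<lambda>(v, q). [Vert v, Eq, Val q]) ps)"

lemma process_eq_block:
  "process vs qs cs = [Vert (last vs), Eq, Qu] @ join_comma (map block (zip (zip vs qs) cs))"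
  by (simp add: process_def block_def)

lemma join_comma_Cons: "bs \<noteq> [] \<Longrightarrow> join_comma (b # bs) = b @ Comma # join_comma bs"
  by (cases bs) auto

lemma set_join_comma_subset:
  "Comma \<in> A \<Longrightarrow> (\<And>b. b \<in> set bs \<Longrightarrow> set b \<subseteq> A) \<Longrightarrow> set (join_comma bs) \<subseteq> A"
  by (induction bs rule: join_comma.induct) auto

lemma dec_append_Comma: "dec (b @ Comma # r) = dec b @ dec r"
  by (induction b rule: dec.induct) auto

lemma dec_join_comma: "dec (join_comma bs) = concat (map dec bs)"
  by (induction bs rule: join_comma.induct) (simp_all add: dec_append_Comma)

lemma dec_map_Ctx: "dec (map Ctx cv @ r) = dec r"
  by (induction cv) auto

lemma dec_block: "dec (block x) = [fst x]"
  by (auto simp: block_def dec_map_Ctx split: prod.splits)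

lemma dec_render: "dec (render ps) = ps"
  by (induction ps) (auto simp: render_def dec_join_comma)

lemma render_Nil [simp]: "render [] = []"
  by (simp add: render_def)

lemma render_Cons:
  "render ((v, q) # ps) = [Vert v, Eq, Val q] @ (if ps = [] then [] else Comma # render ps)"
  by (cases ps) (simp_all add: render_def)

lemma length_render [simp]: "length (render ps) = 4 * length ps - 1"
  by (induction ps) (auto simp: render_Cons)

lemma nth_render:
  fixes ps :: "('v \<times> int) list"
  assumes "p < length (render ps :: ('v, 'c) token list)"
  shows "(render ps :: ('v, 'c) token list) ! p =
    [Vert (fst (ps ! (p div 4))), Eq, Val (snd (ps ! (p div 4))), Comma] ! (p mod 4)"
  using assms
proof (induction ps arbitrary: p)
  case Nil
  then show ?case by simp
next
  case (Cons x ps)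
  obtain v q where x: "x = (v, q)"
    by fastforce
  show ?case
  proof (cases "p < 4")
    case True
    then consider "p = 0" | "p = 1" | "p = 2" | "p = 3"
      by linarith
    then show ?thesis
      using Cons.prems by cases (auto simp: x render_Cons)
  next
    case False
    then have "ps \<noteq> []"
      using Cons.prems by auto
    then have "(render (x # ps) :: ('v, 'c) token list) ! p =
        (render ps :: ('v, 'c) token list) ! (p - 4)"
      using False by (simp add: x render_Cons nth_append numeral_eq_Suc)
    also have "\<dots> = [Vert (fst (ps ! ((p - 4) div 4))), Eq, Val (snd (ps ! ((p - 4) div 4))), Comma]
        ! ((p - 4) mod 4)"
      using Cons.prems False by (intro Cons.IH) auto
    finally show ?thesis
      using False by (simp add: x nth_Cons' div_if mod_if)
  qed
qed

lemma render_snoc_last: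
  "ps \<noteq> [] \<Longrightarrow> \<exists>pre. render ps = pre @ [Vert (fst (last ps)), Eq, Val (snd (last ps))]"
  by (induction ps) (auto simp: render_Cons)

lemma take_render_ends_with_vertex:
  fixes pre :: "('v, 'c) token list"
  assumes "take m (render ps) = pre @ [Vert v, Eq, Val q]" "m < length (render ps :: ('v, 'c) token list)"
  shows "\<exists>j. Suc j < length ps \<and> fst (ps ! j) = v"
proof -
  define R :: "('v, 'c) token list" where "R = render ps"
  have m: "m = length pre + 3"
    using arg_cong[OF assms(1), of length] assms(2) by (simp add: min_def)
  then have "R ! (m - 3) = Vert v"
    using arg_cong[OF assms(1), of "\<lambda>xs. xs ! (m - 3)"] assms(2) by (simp add: R_def nth_append)
  moreover have "R ! (m - 3) =
      [Vert (fst (ps ! ((m - 3) div 4))), Eq, Val (snd (ps ! ((m - 3) div 4))), Comma] ! ((m - 3) mod 4)"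
    unfolding R_def using assms(2) by (intro nth_render) simp
  ultimately have "[Vert (fst (ps ! ((m - 3) div 4))), Eq, Val (snd (ps ! ((m - 3) div 4))), Comma]
      ! ((m - 3) mod 4) = (Vert v :: ('v, 'c) token)"
    by simp
  then have "(m - 3) mod 4 = 0" "fst (ps ! ((m - 3) div 4)) = v"
    using mod_less_divisor[of 4 "m - 3"] by (auto simp: nth_Cons' split: if_splits)
  moreover have "Suc ((m - 3) div 4) < length ps"
  proof -
    have "4 * ((m - 3) div 4) = m - 3"
      using \<open>(m - 3) mod 4 = 0\<close> div_mult_mod_eq[of "m - 3" 4] by simp
    moreover have "m < 4 * length ps - 1"
      using assms(2) by simp
    ultimately show ?thesis
      using m by linarith
  qed
  ultimately show ?thesis by blast
qed

lemma drop_render: "drop 4 (render ps) = render (tl ps)"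
  by (cases ps) (auto simp: render_Cons)

lemma Dlm_notin_render: "Dlm \<notin> set (render ps)"
proof -
  have "set (render ps) \<subseteq> - {Dlm}"
    unfolding render_def by (intro set_join_comma_subset) auto
  then show ?thesis by auto
qed

lemma append_eq_append_suffix:
  "xs @ ys = us @ zs \<Longrightarrow> length zs \<le> length ys \<Longrightarrow> \<exists>ws. ys = ws @ zs"
  using append_eq_append_conv2[of xs ys us zs] by auto

lemma takeWhile_neq_append: "a \<notin> set xs \<Longrightarrow> takeWhile (\<lambda>x. x \<noteq> a) (xs @ a # ys) = xs"
  by (induction xs) auto

lemma dropWhile_neq_append: "a \<notin> set xs \<Longrightarrow> dropWhile (\<lambda>x. x \<noteq> a) (xs @ a # ys) = a # ys"
  by (induction xs) auto

lemma cur_seq_append_Dlm: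
  assumes "Dlm \<notin> set w"
  shows "cur_seq (X @ Dlm # w) = w"
  using assms by (simp add: cur_seq_def takeWhile_neq_append)

lemma set_snd_split_comma: "set (snd (split_comma s)) \<subseteq> set s"
  by (auto simp: split_comma_def dest!: list.set_sel(2)[rotated] set_dropWhileD)

lemma split_comma_no_Comma: "Comma \<notin> set s \<Longrightarrow> split_comma s = (s, [])"
  by (simp add: split_comma_def)

lemma split_comma_append_Comma: "Comma \<notin> set s \<Longrightarrow> split_comma (s @ Comma # r) = (s @ [Comma], r)"
  by (simp add: split_comma_def takeWhile_neq_append dropWhile_neq_append)

lemma split_comma_process:
  assumes "length cs = length ps"
  shows "split_comma ([Vert g, Eq, Qu] @ join_comma (map block (zip ((v, q) # ps) (cv # cs)))) =
    ([Vert g, Eq, Qu] @ map Ctx cv @ take 4 (render ((v, q) # ps)), join_comma (map block (zip ps cs)))"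
proof (cases ps)
  case Nil
  then show ?thesis
    using assms by (auto simp: block_def render_Cons intro!: split_comma_no_Comma)
next
  case (Cons p ps')
  then obtain c' cs' where "cs = c' # cs'"
    using assms by (cases cs) auto
  with Cons have "join_comma (map block (zip ((v, q) # ps) (cv # cs))) =
      block ((v, q), cv) @ Comma # join_comma (map block (zip ps cs))"
    by (simp add: join_comma_Cons)
  moreover have "Comma \<notin> set ([Vert g, Eq, Qu] @ block ((v, q), cv))"
    by (auto simp: block_def)
  ultimately show ?thesis
    using Cons split_comma_append_Comma by (fastforce simp: block_def render_Cons)
qed

lemma mk_kshot_fst:
  "shots \<noteq> [] \<Longrightarrow> \<exists>X. fst (mk_kshot shots s) = X @ Dlm # fst (split_comma s)"
  by (cases shots rule: rev_cases) (auto simp: mk_kshot_def)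

lemma takeWhile_mk_kshot:
  "shots \<noteq> [] \<Longrightarrow> Dlm \<notin> set (hd shots) \<Longrightarrow>
    takeWhile (\<lambda>x. x \<noteq> Dlm) (fst (mk_kshot shots s) @ w) = hd shots"
  by (cases shots) (auto simp: mk_kshot_def takeWhile_tail)

section \<open>Supports of the data distributions\<close>

lemma set_seq_pmf: "set_pmf (seq_pmf ps) = {xs. list_all2 (\<lambda>x p. x \<in> set_pmf p) xs ps}"
  by (induction ps) (auto simp: set_bind_pmf list_all2_Cons2)

lemma finite_set_seq_pmf: "(\<And>p. p \<in> set ps \<Longrightarrow> finite (set_pmf p)) \<Longrightarrow> finite (set_pmf (seq_pmf ps))"
  by (induction ps) (auto simp: set_bind_pmf)

lemma finite_set_gen_vals:
  "(\<And>v. v \<in> set vs \<Longrightarrow> finite (VALS v) \<and> VALS v \<noteq> {}) \<Longrightarrow> finite (set_pmf (gen_vals VALS c V prev vs))"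
  by (induction vs arbitrary: prev) (auto simp: set_bind_pmf split: option.splits)

lemma length_gen_vals: "qs \<in> set_pmf (gen_vals VALS c V prev vs) \<Longrightarrow> length qs = length vs"
  by (induction vs arbitrary: prev qs) (auto simp: set_bind_pmf split: option.splits if_splits)

lemma gen_vals_in_VALS:
  assumes "\<And>v. v \<in> set vs \<Longrightarrow> finite (VALS v) \<and> VALS v \<noteq> {}"
    and "\<And>u v q. (u, v) \<in> E \<Longrightarrow> q \<in> VALS u \<Longrightarrow> q + c (u, v) \<in> VALS v"
    and "successively (\<lambda>u v. (u, v) \<in> E) (filter (\<lambda>v. v \<in> V) vs)"
    and "\<forall>(u, q)\<in>set_option prev. q \<in> VALS u \<and>
           (filter (\<lambda>v. v \<in> V) vs \<noteq> [] \<longrightarrow> (u, hd (filter (\<lambda>v. v \<in> V) vs)) \<in> E)"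
    and "qs \<in> set_pmf (gen_vals VALS c V prev vs)"
  shows "list_all2 (\<lambda>v q. q \<in> VALS v) vs qs"
  using assms(1,3-5)
proof (induction vs arbitrary: prev qs)
  case Nil
  then show ?case by simp
next
  case (Cons v vs)
  show ?case
  proof (cases "v \<in> V")
    case True
    then obtain q qs' where qs: "qs = q # qs'" "qs' \<in> set_pmf (gen_vals VALS c V (Some (v, q)) vs)"
      and q: "q \<in> (case prev of None \<Rightarrow> VALS v | Some (u, q\<^sub>0) \<Rightarrow> {q\<^sub>0 + c (u, v)})"
      using Cons.prems(1,4) by (auto simp: set_bind_pmf split: option.splits)
    have "q \<in> VALS v"
      using q Cons.prems(3) True assms(2) by (auto split: option.splits)
    then show ?thesis
      using Cons.IH[OF _ _ _ qs(2)] Cons.prems(1,2) True qs(1) by (auto simp: successively_Cons)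
  next
    case False
    then obtain q qs' where "qs = q # qs'" "q \<in> VALS v" "qs' \<in> set_pmf (gen_vals VALS c V prev vs)"
      using Cons.prems(1,4) by (auto simp: set_bind_pmf)
    then show ?thesis
      using Cons.IH Cons.prems(1-3) False by simp
  qed
qed

fun chain_vals :: "('v \<times> 'v \<Rightarrow> int) \<Rightarrow> 'v \<Rightarrow> int \<Rightarrow> 'v list \<Rightarrow> int list" where
  "chain_vals c u q [] = []"
| "chain_vals c u q (v # vs) = (q + c (u, v)) # chain_vals c v (q + c (u, v)) vs"

lemma length_chain_vals [simp]: "length (chain_vals c u q vs) = length vs"
  by (induction vs arbitrary: u q) auto

lemma gen_vals_Some_chain:
  "set vs \<subseteq> V \<Longrightarrow> gen_vals VALS c V (Some (u, q)) vs = return_pmf (chain_vals c u q vs)"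
  by (induction vs arbitrary: u q) (simp_all add: map_return_pmf bind_return_pmf)

lemma set_gen_vals_chain:
  "set (v # vs) \<subseteq> V \<Longrightarrow> qs \<in> set_pmf (gen_vals VALS c V None (v # vs)) \<Longrightarrow>
    \<exists>q. qs = q # chain_vals c v q vs"
  by (auto simp: gen_vals_Some_chain set_bind_pmf)

lemma set_ctx_pmf_subset:
  assumes "finite (CONT v)" "CONT v \<noteq> {}"
  shows "set_pmf (ctx_pmf CONT v) \<subseteq> {cs. set cs \<subseteq> CONT v \<and> length cs \<le> card (CONT v)}"
proof -
  define X where "X l = {cs. distinct cs \<and> set cs \<subseteq> CONT v \<and> length cs = l}" for l
  obtain ys where ys: "distinct ys" "set ys = CONT v"
    using finite_distinct_list[OF assms(1)] by blast
  have "take l ys \<in> X l" if "l \<le> card (CONT v)" for l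
    using ys that distinct_card[OF ys(1)] by (auto simp: X_def dest: in_set_takeD)
  moreover have "finite (X l)" for l
    using finite_lists_length_eq[OF assms(1), of l] by (auto simp: X_def elim: finite_subset[rotated])
  ultimately have "set_pmf (pmf_of_set (X l)) = X l" if "l \<le> card (CONT v)" for l
    using that by (intro set_pmf_of_set) auto
  moreover have "{1..card (CONT v)} \<noteq> {}"
    using assms by (simp add: Suc_leI card_gt_0_iff)
  ultimately show ?thesis
    by (auto simp: ctx_pmf_def set_bind_pmf X_def[symmetric]) (auto simp: X_def)
qed

lemma finite_set_ctx_pmf: "finite (CONT v) \<Longrightarrow> CONT v \<noteq> {} \<Longrightarrow> finite (set_pmf (ctx_pmf CONT v))"
  by (rule finite_subset[OF set_ctx_pmf_subset finite_lists_length_le])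

lemma set_proc_pmf:
  "set_pmf (proc_pmf VALS CONT c V vs) = {process vs qs cs | qs cs.
     qs \<in> set_pmf (gen_vals VALS c V None vs) \<and> list_all2 (\<lambda>cv v. cv \<in> set_pmf (ctx_pmf CONT v)) cs vs}"
  by (auto simp: proc_pmf_def set_bind_pmf set_seq_pmf list_all2_map2)

lemma finite_set_proc_pmf:
  assumes "\<And>v. v \<in> set vs \<Longrightarrow> finite (VALS v) \<and> VALS v \<noteq> {} \<and> finite (CONT v) \<and> CONT v \<noteq> {}"
  shows "finite (set_pmf (proc_pmf VALS CONT c V vs))"
proof -
  have "finite (set_pmf (gen_vals VALS c V None vs))"
    using assms by (intro finite_set_gen_vals) blast
  moreover have "finite (set_pmf (seq_pmf (map (ctx_pmf CONT) vs)))"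
    using assms by (intro finite_set_seq_pmf) (auto intro: finite_set_ctx_pmf)
  ultimately show ?thesis
    unfolding proc_pmf_def set_bind_pmf set_map_pmf by (intro finite_UN_I finite_imageI)
qed

lemma list_all2_replicate_right:
  "list_all2 P xs (replicate n y) \<longleftrightarrow> length xs = n \<and> (\<forall>x\<in>set xs. P x y)"
  by (auto simp: list_all2_conv_all_nth all_set_conv_all_nth)

lemma set_data_pmf:
  "set_pmf (data_pmf VALS CONT c V D k) = {mk_kshot (take k ss) (ss ! k) | vs ss.
     vs \<in> set_pmf D \<and> length ss = Suc k \<and> set ss \<subseteq> set_pmf (proc_pmf VALS CONT c V vs)}"
  unfolding data_pmf_def kshot_pmf_def set_bind_pmf set_map_pmf set_seq_pmf list_all2_replicate_right
  by blast

lemma data_pmf_sample: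
  assumes "x \<in> set_pmf (data_pmf VALS CONT c V D k)"
  obtains vs ss where "vs \<in> set_pmf D" "length ss = Suc k"
    "set ss \<subseteq> set_pmf (proc_pmf VALS CONT c V vs)" "x = mk_kshot (take k ss) (ss ! k)"
  using assms unfolding set_data_pmf by blast

lemma finite_set_data_pmf:
  assumes "finite (set_pmf D)"
    and "\<And>vs v. vs \<in> set_pmf D \<Longrightarrow> v \<in> set vs \<Longrightarrow>
           finite (VALS v) \<and> VALS v \<noteq> {} \<and> finite (CONT v) \<and> CONT v \<noteq> {}"
  shows "finite (set_pmf (data_pmf VALS CONT c V D k))"
proof -
  have "finite (set_pmf (seq_pmf (replicate (Suc k) (proc_pmf VALS CONT c V vs))))"
    if "vs \<in> set_pmf D" for vs
    using finite_set_proc_pmf[OF assms(2)[OF that]] by (intro finite_set_seq_pmf) auto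
  then have "finite (set_pmf (kshot_pmf VALS CONT c V k vs))" if "vs \<in> set_pmf D" for vs
    unfolding kshot_pmf_def set_map_pmf using that by (intro finite_imageI)
  with assms(1) show ?thesis
    unfolding data_pmf_def set_bind_pmf by (intro finite_UN_I)
qed

definition first_shot_vertices :: "('v, 'c) token list \<Rightarrow> 'v list" where
  "first_shot_vertices z = map fst (dec (takeWhile (\<lambda>x. x \<noteq> Dlm) z))"

lemma Dlm_notin_process: "Dlm \<notin> set (process vs qs cs)"
proof -
  have "set (join_comma (map block (zip (zip vs qs) cs))) \<subseteq> - {Dlm}"
    by (intro set_join_comma_subset) (auto simp: block_def)
  then show ?thesis
    by (auto simp: process_eq_block)
qed

lemma map_fst_dec_process:
  "length qs = length vs \<Longrightarrow> length cs = length vs \<Longrightarrow> map fst (dec (process vs qs cs)) = vs"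
  by (simp add: process_eq_block dec_join_comma dec_block comp_def)

lemma first_shot_vertices_kshot:
  assumes "0 < k" "length ss = Suc k" "set ss \<subseteq> set_pmf (proc_pmf VALS CONT c V vs)"
  shows "first_shot_vertices (fst (mk_kshot (take k ss) (ss ! k)) @ w) = vs"
proof -
  have "ss ! 0 \<in> set_pmf (proc_pmf VALS CONT c V vs)"
    using assms(2,3) by auto
  then obtain qs cs where s0: "ss ! 0 = process vs qs cs" and "qs \<in> set_pmf (gen_vals VALS c V None vs)"
    and "list_all2 (\<lambda>cv v. cv \<in> set_pmf (ctx_pmf CONT v)) cs vs"
    unfolding set_proc_pmf by blast
  then have "length qs = length vs" "length cs = length vs"
    by (auto dest: length_gen_vals list_all2_lengthD)
  moreover have "take k ss \<noteq> []" "hd (take k ss) = ss ! 0"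
    using assms(1,2) by (cases ss; simp)+
  then have "takeWhile (\<lambda>x. x \<noteq> Dlm) (fst (mk_kshot (take k ss) (ss ! k)) @ w) = ss ! 0"
    by (simp add: takeWhile_mk_kshot s0 Dlm_notin_process)
  ultimately show ?thesis
    by (simp add: first_shot_vertices_def s0 map_fst_dec_process)
qed

lemma kshot_input_ne:
  "0 < k \<Longrightarrow> length ss = Suc k \<Longrightarrow> fst (mk_kshot (take k ss) (ss ! k)) \<noteq> []"
  using mk_kshot_fst[of "take k ss" "ss ! k"] by (cases ss) auto

lemma
  assumes "(inp, lab) \<in> set_pmf (data_pmf VALS CONT c V D k)" "0 < k"
  shows first_shot_vertices_data_pmf: "first_shot_vertices (inp @ w) \<in> set_pmf D"
    and input_data_pmf_ne: "inp \<noteq> []"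
proof -
  obtain vs ss where "vs \<in> set_pmf D" "length ss = Suc k" "set ss \<subseteq> set_pmf (proc_pmf VALS CONT c V vs)"
    and "(inp, lab) = mk_kshot (take k ss) (ss ! k)"
    by (rule data_pmf_sample[OF assms(1)])
  then show "first_shot_vertices (inp @ w) \<in> set_pmf D" "inp \<noteq> []"
    using first_shot_vertices_kshot[OF assms(2)] kshot_input_ne[OF assms(2)] by (metis fst_conv)+
qed

section \<open>Losses and greedy decoding\<close>

lemma Pmodel_pos_le_1:
  assumes "finite A" "a \<in> A"
  shows "0 < Pmodel A \<theta> zs a" "Pmodel A \<theta> zs a \<le> 1"
proof -
  have "exp (logit \<theta> zs a) \<le> (\<Sum>b\<in>A. exp (logit \<theta> zs b))"
    using assms by (intro member_le_sum) auto
  moreover have "0 < (\<Sum>b\<in>A. exp (logit \<theta> zs b))"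
    using assms by (intro sum_pos) auto
  ultimately show "0 < Pmodel A \<theta> zs a" "Pmodel A \<theta> zs a \<le> 1"
    by (simp_all add: Pmodel_def)
qed

lemma seq_loss_nonneg:
  assumes "finite A" "set lab \<subseteq> A"
  shows "0 \<le> seq_loss A \<theta> inp lab"
  unfolding seq_loss_def
proof (intro sum_nonneg)
  fix t assume "t \<in> {1..<length lab}"
  then have "lab ! t \<in> A"
    using assms(2) by auto
  then show "0 \<le> - ln (Pmodel A \<theta> (inp @ take t lab) (lab ! t))"
    using Pmodel_pos_le_1[OF assms(1)] by simp
qed

lemma seq_loss_cong:
  "(\<And>t. t \<in> {1..<length lab} \<Longrightarrow> logit \<theta> (inp @ take t lab) = logit \<theta>' (inp @ take t lab)) \<Longrightarrow>
    seq_loss A \<theta> inp lab = seq_loss A \<theta>' inp lab"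
  by (auto simp: seq_loss_def Pmodel_def intro!: sum.cong)

lemma train_loss_cong:
  assumes "\<And>k inp lab t. k \<in> {1..<K} \<Longrightarrow> (inp, lab) \<in> set_pmf (data_pmf VALS CONT c V D k) \<Longrightarrow>
      t \<in> {1..<length lab} \<Longrightarrow> logit \<theta> (inp @ take t lab) = logit \<theta>' (inp @ take t lab)"
  shows "train_loss Vall VALS CONT c V K D \<theta> = train_loss Vall VALS CONT c V K D \<theta>'"
  unfolding train_loss_def
  by (intro sum.cong refl integral_cong_AE AE_pmfI) (auto intro!: seq_loss_cong assms)

lemma is_argmax_indicator_iff:
  assumes "finite A" "a \<in> A" "logit \<theta> zs = (\<lambda>x. if x = a then 1 else 0)"
  shows "is_argmax A (Pmodel A \<theta> zs) b \<longleftrightarrow> b = a"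
proof -
  have Z: "0 < (\<Sum>b\<in>A. exp (logit \<theta> zs b))"
    using assms by (intro sum_pos) auto
  have "Pmodel A \<theta> zs y < Pmodel A \<theta> zs a" if "y \<noteq> a" for y
    using that Z by (simp add: Pmodel_def assms(3) divide_strict_right_mono)
  moreover have "Pmodel A \<theta> zs y \<le> Pmodel A \<theta> zs a" for y
    using Z by (simp add: Pmodel_def assms(3) divide_right_mono)
  ultimately show ?thesis
    using assms(2) by (auto simp: is_argmax_def not_le[symmetric])
qed

lemma greedy_run_iff:
  assumes "finite A" "set out \<subseteq> A"
    and logits: "\<And>i. i < length out \<Longrightarrow> logit \<theta> (z @ take i out) = (\<lambda>a. if a = out ! i then 1 else 0)"
    and "stops z out" "\<And>i. i < length out \<Longrightarrow> \<not> stops z (take i out)"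
  shows "greedy_run A \<theta> z out' \<longleftrightarrow> out' = out"
proof
  have argmax: "is_argmax A (Pmodel A \<theta> (z @ take i out)) b \<longleftrightarrow> b = out ! i" if "i < length out" for i b
    using that assms(2) by (intro is_argmax_indicator_iff[OF assms(1) _ logits]) auto
  show "out' = out \<Longrightarrow> greedy_run A \<theta> z out'"
    using argmax assms(4,5) by (simp add: greedy_run_def)
  assume run: "greedy_run A \<theta> z out'"
  have prefix: "take i out' = take i out" if "i \<le> length out" "i \<le> length out'" for i
    using that
  proof (induction i)
    case (Suc i)
    have "is_argmax A (Pmodel A \<theta> (z @ take i out')) (out' ! i)"
      using run Suc.prems by (auto simp: greedy_run_def)
    then have "is_argmax A (Pmodel A \<theta> (z @ take i out)) (out' ! i)"
      using Suc by simp
    then show ?case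
      using Suc argmax by (simp add: take_Suc_conv_app_nth)
  qed simp
  consider "length out' < length out" | "length out < length out'" | "length out' = length out"
    by linarith
  then show "out' = out"
  proof cases
    case 1
    then show ?thesis
      using prefix[of "length out'"] run assms(5)[of "length out'"] by (simp add: greedy_run_def)
  next
    case 2
    then show ?thesis
      using prefix[of "length out"] run assms(4) by (auto simp: greedy_run_def)
  next
    case 3
    then show ?thesis
      using prefix[of "length out"] by simp
  qed
qed

lemma exists_near_INF:
  fixes f :: "'a \<Rightarrow> real"
  assumes "bdd_below (range f)" "0 < \<epsilon>"
  shows "\<exists>x. \<bar>f x - (INF y. f y)\<bar> < \<epsilon>"
proof -
  obtain x where "f x < (INF y. f y) + \<epsilon>"
    using cInf_lessD[of "range f" "(INF y. f y) + \<epsilon>"] assms(2) by auto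
  moreover have "(INF y. f y) \<le> f x"
    using assms(1) by (rule cINF_lower) simp
  ultimately show ?thesis
    by (intro exI[of _ x]) simp
qed

section \<open>Correct completions of test inputs\<close>

fun val_of :: "('v, 'c) token \<Rightarrow> int" where
  "val_of (Val q) = q"
| "val_of _ = 0"

text \<open>The \<open>k\<close>-shot input that a partial output extends ends at the first comma of the current
  sequence.  All shots share the vertex list, which the first shot names, and the input ends
  with the value of the first vertex; the correct completion propagates it along the chain.\<close>

definition query_prefix :: "('v, 'c) token list \<Rightarrow> ('v, 'c) token list" where
  "query_prefix z = take (length z - length (cur_seq z) +
     length (takeWhile (\<lambda>x. x \<noteq> Comma) (cur_seq z)) + 1) z"

definition expected_completion :: "('v \<times> 'v \<Rightarrow> int) \<Rightarrow> ('v, 'c) token list \<Rightarrow> ('v, 'c) token list" where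
  "expected_completion c inp =
     (let vs = first_shot_vertices inp; q = val_of (inp ! (length inp - 2))
      in render (zip (tl vs) (chain_vals c (hd vs) q (tl vs))))"

definition correct_next :: "('v \<times> 'v \<Rightarrow> int) \<Rightarrow> ('v, 'c) token list \<Rightarrow> ('v, 'c) token" where
  "correct_next c z = expected_completion c (query_prefix z) ! (length z - length (query_prefix z))"

lemma query_prefix_append:
  assumes "Dlm \<notin> set P" "Comma \<notin> set P" "Dlm \<notin> set w"
  shows "query_prefix (X @ Dlm # P @ Comma # w) = X @ Dlm # P @ [Comma]"
proof -
  have "cur_seq (X @ Dlm # P @ Comma # w) = P @ Comma # w"
    using assms by (intro cur_seq_append_Dlm) simp
  then show ?thesis
    using assms(2) by (simp add: query_prefix_def takeWhile_neq_append)
qed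

lemma correct_next_append:
  assumes "inp = X @ Dlm # P @ [Comma]" "Dlm \<notin> set P" "Comma \<notin> set P" "Dlm \<notin> set out"
    and "expected_completion c inp = out" "i < length out"
  shows "correct_next c (inp @ take i out) = out ! i"
proof -
  have "query_prefix (inp @ take i out) = inp"
    using assms(1-4) query_prefix_append[of P "take i out" X] by (auto dest: in_set_takeD)
  then show ?thesis
    using assms(5,6) by (simp add: correct_next_def)
qed

lemma correct_next_render:
  fixes ps :: "('v \<times> int) list"
  assumes "inp = X @ Dlm # [Vert g, Eq, Qu] @ map Ctx cv @ take 4 (render ps)"
    and "expected_completion c inp = render (tl ps)"
    and "i < length (render (tl ps) :: ('v, 'c) token list)"
  shows "correct_next c (inp @ take i (render (tl ps))) = render (tl ps) ! i"
proof -
  obtain v q p ps' where "ps = (v, q) # p # ps'"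
    using assms(3) by (cases ps; cases "tl ps") auto
  then have "inp = X @ Dlm # ([Vert g, Eq, Qu] @ map Ctx cv @ [Vert v, Eq, Val q]) @ [Comma]"
    by (simp add: assms(1) render_Cons)
  then show ?thesis
    by (rule correct_next_append) (use assms(2,3) Dlm_notin_render in auto)
qed

lemma expected_completion_eq:
  assumes "first_shot_vertices inp = v # vs"
    and "inp = P @ take 4 (render ((v, q) # zip vs (chain_vals c v q vs)))"
  shows "expected_completion c inp = render (zip vs (chain_vals c v q vs))"
proof (cases vs)
  case Nil
  then show ?thesis
    using assms(1) by (simp add: expected_completion_def)
next
  case (Cons v' vs')
  then have "inp = (P @ [Vert v, Eq]) @ [Val q, Comma]"
    using assms(2) by (simp add: render_Cons)
  then have "inp ! (length inp - 2) = Val q"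
    by (simp add: nth_append)
  then show ?thesis
    using assms(1) by (simp add: expected_completion_def Let_def)
qed

lemma stops_render:
  fixes P :: "('v, 'c) token list"
  assumes "ps \<noteq> []" "hd (cur_seq (P @ take 4 (render ps))) = Vert (fst (last ps))"
  shows "stops (P @ take 4 (render ps)) (render (tl ps))"
proof -
  obtain pre :: "('v, 'c) token list"
    where "render ps = pre @ [Vert (fst (last ps)), Eq, Val (snd (last ps))]"
    using render_snoc_last[OF assms(1)] by blast
  moreover have "take 4 (render ps) @ render (tl ps) = (render ps :: ('v, 'c) token list)"
    by (simp flip: drop_render)
  ultimately have "(P @ take 4 (render ps)) @ render (tl ps) =
      (P @ pre) @ [Vert (fst (last ps)), Eq, Val (snd (last ps))]"
    by simp
  then show ?thesis
    unfolding stops_def assms(2) by blast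
qed

lemma not_stops_render_prefix:
  fixes P :: "('v, 'c) token list"
  assumes "hd (cur_seq (P @ take 4 (render ps))) = Vert (fst (last ps))"
    and "\<And>j. Suc j < length ps \<Longrightarrow> fst (ps ! j) \<noteq> fst (last ps)"
    and "i < length (render (tl ps) :: ('v, 'c) token list)"
  shows "\<not> stops (P @ take 4 (render ps)) (take i (render (tl ps)))"
proof
  define R :: "('v, 'c) token list" where "R = render ps"
  assume "stops (P @ take 4 R) (take i (render (tl ps)))"
  then obtain pre q
    where "(P @ take 4 R) @ take i (render (tl ps)) = pre @ [Vert (fst (last ps)), Eq, Val q]"
    unfolding stops_def assms(1)[folded R_def] by blast
  moreover have "take 4 R @ take i (render (tl ps)) = take (4 + i) R"
    by (simp add: R_def take_add drop_render)
  ultimately have eq: "P @ take (4 + i) R = pre @ [Vert (fst (last ps)), Eq, Val q]"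
    by simp
  have len: "4 + i < length R"
    using assms(3) by (cases ps) (auto simp: R_def)
  have "\<exists>ws. take (4 + i) R = ws @ [Vert (fst (last ps)), Eq, Val q]"
    by (rule append_eq_append_suffix[OF eq]) (use len in simp)
  then obtain ws where "take (4 + i) R = ws @ [Vert (fst (last ps)), Eq, Val q]"
    by blast
  from take_render_ends_with_vertex[OF this[unfolded R_def] len[unfolded R_def]]
  obtain j where "Suc j < length ps" "fst (ps ! j) = fst (last ps)"
    by blast
  with assms(2) show False
    by blast
qed

section \<open>Causal structures\<close>

lemma is_chain_iff_successively:
  "is_chain V E vs \<longleftrightarrow> vs \<noteq> [] \<and> set vs \<subseteq> V \<and> successively (\<lambda>u v. (u, v) \<in> E) vs"
  by (simp add: is_chain_def successively_conv_nth)

lemma test_list_nth_neq_last: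
  assumes "finite (chains V E)" "test_list V E vs" "Suc j < length vs"
  shows "vs ! j \<noteq> last vs"
proof
  \<comment> \<open>Otherwise \<open>vs @ drop (Suc j) vs\<close> would be a longer chain.\<close>
  assume last: "vs ! j = last vs"
  let ?E = "\<lambda>u v. (u, v) \<in> E"
  have chain: "vs \<noteq> []" "set vs \<subseteq> V" "successively ?E vs" and N: "length vs = maxlen V E"
    using assms(2) by (auto simp: test_list_def is_chain_iff_successively)
  have split: "vs = take (Suc j) vs @ drop (Suc j) vs"
    by simp
  have "successively ?E (drop (Suc j) vs)"
    using chain(3) split successively_append_iff by metis
  moreover have "?E (last vs) (hd (drop (Suc j) vs))"
    using successively_nth[OF chain(3) assms(3)] last assms(3) by (simp add: hd_drop_conv_nth)
  ultimately have "is_chain V E (vs @ drop (Suc j) vs)"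
    using chain by (auto simp: is_chain_iff_successively successively_append_iff dest: in_set_dropD)
  then have "length (vs @ drop (Suc j) vs) \<le> maxlen V E"
    using assms(1) unfolding maxlen_def chains_def by (intro Max_ge finite_imageI imageI) auto
  then show False
    using N assms(3) by simp
qed

lemma mem_alphabet_iff [simp]:
  "Vert v \<in> alphabet Vall VALS CONT \<longleftrightarrow> v \<in> Vall"
  "Val q \<in> alphabet Vall VALS CONT \<longleftrightarrow> (\<exists>v\<in>Vall. q \<in> VALS v)"
  "Ctx x \<in> alphabet Vall VALS CONT \<longleftrightarrow> (\<exists>v\<in>Vall. x \<in> CONT v)"
  "Eq \<in> alphabet Vall VALS CONT" "Comma \<in> alphabet Vall VALS CONT" "Qu \<in> alphabet Vall VALS CONT"
  by (auto simp: alphabet_def)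

locale causal_structure =
  fixes Vall V :: "'v set" and E :: "('v \<times> 'v) set" and VALS :: "'v \<Rightarrow> int set"
    and CONT :: "'v \<Rightarrow> 'c set" and c :: "'v \<times> 'v \<Rightarrow> int"
  assumes valid_structure: "valid_structure Vall V E VALS CONT c"
begin

lemma finite_alphabet: "finite (alphabet Vall VALS CONT)"
  using valid_structure by (auto simp: valid_structure_def alphabet_def)

lemma V_subset_Vall: "V \<subseteq> Vall"
  using valid_structure by (simp add: valid_structure_def)

lemma finite_chains: "finite (chains V E)"
  using valid_structure by (simp add: valid_structure_def)

lemma VALS_CONT_finite_nonempty:
  "v \<in> Vall \<Longrightarrow> finite (VALS v) \<and> VALS v \<noteq> {} \<and> finite (CONT v) \<and> CONT v \<noteq> {}"
  using valid_structure by (simp add: valid_structure_def)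

lemma VALS_step: "(u, v) \<in> E \<Longrightarrow> q \<in> VALS u \<Longrightarrow> q + c (u, v) \<in> VALS v"
  using valid_structure by (fastforce simp: valid_structure_def)

lemma proc_pmf_sample:
  assumes "set vs \<subseteq> Vall" "successively (\<lambda>u v. (u, v) \<in> E) (filter (\<lambda>v. v \<in> V) vs)"
    and "s \<in> set_pmf (proc_pmf VALS CONT c V vs)"
  obtains qs cs where "s = process vs qs cs" "qs \<in> set_pmf (gen_vals VALS c V None vs)"
    "list_all2 (\<lambda>v q. q \<in> VALS v) vs qs" "list_all2 (\<lambda>v cv. set cv \<subseteq> CONT v) vs cs"
proof -
  obtain qs cs where s: "s = process vs qs cs" and qs: "qs \<in> set_pmf (gen_vals VALS c V None vs)"
    and cs: "list_all2 (\<lambda>cv v. cv \<in> set_pmf (ctx_pmf CONT v)) cs vs"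
    using assms(3) unfolding set_proc_pmf by blast
  have "list_all2 (\<lambda>v q. q \<in> VALS v) vs qs"
  proof (rule gen_vals_in_VALS[OF _ VALS_step assms(2) _ qs])
    show "finite (VALS v) \<and> VALS v \<noteq> {}" if "v \<in> set vs" for v
      using that assms(1) VALS_CONT_finite_nonempty by blast
  qed auto
  moreover have "list_all2 (\<lambda>v cv. set cv \<subseteq> CONT v) vs cs"
    unfolding list_all2_conv_all_nth
  proof (intro conjI allI impI)
    show "length vs = length cs"
      using cs by (simp add: list_all2_lengthD)
    fix i assume "i < length vs"
    then have "cs ! i \<in> set_pmf (ctx_pmf CONT (vs ! i))" "vs ! i \<in> Vall"
      using cs assms(1) by (auto simp: list_all2_conv_all_nth)
    then show "set (cs ! i) \<subseteq> CONT (vs ! i)"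
      using set_ctx_pmf_subset[of CONT "vs ! i"] VALS_CONT_finite_nonempty[of "vs ! i"] by auto
  qed
  ultimately show ?thesis
    using that s qs by blast
qed

lemma set_process_subset_alphabet:
  assumes "vs \<noteq> []" "set vs \<subseteq> Vall"
    and "list_all2 (\<lambda>v q. q \<in> VALS v) vs qs" "list_all2 (\<lambda>v cv. set cv \<subseteq> CONT v) vs cs"
  shows "set (process vs qs cs) \<subseteq> alphabet Vall VALS CONT"
proof -
  have "set (block x) \<subseteq> alphabet Vall VALS CONT" if x: "x \<in> set (zip (zip vs qs) cs)" for x
  proof -
    obtain i where "i < length (zip (zip vs qs) cs)" "x = zip (zip vs qs) cs ! i"
      using x unfolding in_set_conv_nth by blast
    then have "i < length vs" "x = ((vs ! i, qs ! i), cs ! i)"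
      using list_all2_lengthD[OF assms(3)] list_all2_lengthD[OF assms(4)] by auto
    moreover from this have "vs ! i \<in> Vall" "qs ! i \<in> VALS (vs ! i)" "set (cs ! i) \<subseteq> CONT (vs ! i)"
      using assms(2-4) by (auto simp: list_all2_conv_all_nth)
    ultimately show ?thesis
      by (fastforce simp: block_def)
  qed
  then have "set (join_comma (map block (zip (zip vs qs) cs))) \<subseteq> alphabet Vall VALS CONT"
    by (intro set_join_comma_subset) auto
  moreover have "last vs \<in> Vall"
    using assms(1,2) by auto
  ultimately show ?thesis
    by (simp add: process_eq_block)
qed

lemma set_render_subset_alphabet:
  assumes "\<And>v q. (v, q) \<in> set ps \<Longrightarrow> v \<in> Vall \<and> q \<in> VALS v"
  shows "set (render ps) \<subseteq> alphabet Vall VALS CONT"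
proof -
  have "set b \<subseteq> alphabet Vall VALS CONT" if "b \<in> set (map (\<lambda>(v, q). [Vert v, Eq, Val q]) ps)" for b
    using that assms by fastforce
  then show ?thesis
    unfolding render_def by (intro set_join_comma_subset) auto
qed

lemma set_label_subset_alphabet:
  assumes "x \<in> set_pmf (data_pmf VALS CONT c V D k)" "set_pmf D \<subseteq> {vs. train_list Vall V E vs}"
  shows "set (snd x) \<subseteq> alphabet Vall VALS CONT"
proof -
  obtain vs ss where vs: "vs \<in> set_pmf D" and ss: "length ss = Suc k"
    "set ss \<subseteq> set_pmf (proc_pmf VALS CONT c V vs)" and x: "x = mk_kshot (take k ss) (ss ! k)"
    by (rule data_pmf_sample[OF assms(1)])
  have wf: "set vs \<subseteq> Vall" "vs \<noteq> []" "successively (\<lambda>u v. (u, v) \<in> E) (filter (\<lambda>v. v \<in> V) vs)"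
    using vs assms(2) by (auto simp: train_list_def is_chain_iff_successively)
  moreover have "ss ! k \<in> set_pmf (proc_pmf VALS CONT c V vs)"
    using ss by auto
  ultimately obtain qs cs where "ss ! k = process vs qs cs"
    "list_all2 (\<lambda>v q. q \<in> VALS v) vs qs" "list_all2 (\<lambda>v cv. set cv \<subseteq> CONT v) vs cs"
    by (elim proc_pmf_sample)
  then have "set (ss ! k) \<subseteq> alphabet Vall VALS CONT"
    using wf set_process_subset_alphabet by simp
  then show ?thesis
    using set_snd_split_comma[of "ss ! k"] by (auto simp: x mk_kshot_def)
qed

lemma test_kshot_shape:
  assumes "test_list V E vs" "0 < k" "length ss = Suc k"
    and "set ss \<subseteq> set_pmf (proc_pmf VALS CONT c V vs)"
  obtains X cv ps cs where
    "fst (mk_kshot (take k ss) (ss ! k)) =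
      X @ Dlm # [Vert (last vs), Eq, Qu] @ map Ctx cv @ take 4 (render ps)"
    "snd (mk_kshot (take k ss) (ss ! k)) = join_comma (map block (zip (tl ps) cs))"
    "map fst ps = vs" "length cs = length (tl ps)"
    "\<And>v q. (v, q) \<in> set ps \<Longrightarrow> v \<in> Vall \<and> q \<in> VALS v"
    "expected_completion c (fst (mk_kshot (take k ss) (ss ! k))) = render (tl ps)"
proof -
  have chain: "vs \<noteq> []" "set vs \<subseteq> V" "successively (\<lambda>u v. (u, v) \<in> E) vs"
    using assms(1) by (auto simp: test_list_def is_chain_iff_successively)
  then have wf: "set vs \<subseteq> Vall" "filter (\<lambda>v. v \<in> V) vs = vs"
    using V_subset_Vall by (auto simp: filter_id_conv)
  obtain v\<^sub>1 vr where vs: "vs = v\<^sub>1 # vr"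
    using chain(1) by (cases vs) auto
  have "ss ! k \<in> set_pmf (proc_pmf VALS CONT c V vs)"
    using assms(3,4) by auto
  then obtain qs cs' where sk: "ss ! k = process vs qs cs'"
    and qs: "qs \<in> set_pmf (gen_vals VALS c V None vs)" and qs_VALS: "list_all2 (\<lambda>v q. q \<in> VALS v) vs qs"
    and cs': "list_all2 (\<lambda>v cv. set cv \<subseteq> CONT v) vs cs'"
    using wf chain(3) by (elim proc_pmf_sample) auto
  obtain q\<^sub>1 where q\<^sub>1: "qs = q\<^sub>1 # chain_vals c v\<^sub>1 q\<^sub>1 vr"
    using set_gen_vals_chain[of v\<^sub>1 vr V qs VALS c] qs chain(2) vs by blast
  obtain cv cs where cs: "cs' = cv # cs" "length cs = length vr"
    using list_all2_lengthD[OF cs'] vs by (cases cs') auto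
  define ps where "ps = zip vs qs"
  have ps: "ps = (v\<^sub>1, q\<^sub>1) # zip vr (chain_vals c v\<^sub>1 q\<^sub>1 vr)"
    by (simp add: ps_def vs q\<^sub>1)
  have split: "split_comma (ss ! k) = ([Vert (last vs), Eq, Qu] @ map Ctx cv @ take 4 (render ps),
      join_comma (map block (zip (tl ps) cs)))"
    using cs split_comma_process[of cs "zip vr (chain_vals c v\<^sub>1 q\<^sub>1 vr)"]
    by (simp add: sk process_eq_block ps vs q\<^sub>1)
  obtain X where X: "fst (mk_kshot (take k ss) (ss ! k)) = X @ Dlm # fst (split_comma (ss ! k))"
    using mk_kshot_fst[of "take k ss"] assms(2,3) by (cases ss) auto
  have "expected_completion c (fst (mk_kshot (take k ss) (ss ! k))) = render (tl ps)"
    using first_shot_vertices_kshot[OF assms(2-4), of "[]"]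
    by (subst expected_completion_eq[where P = "X @ Dlm # [Vert (last vs), Eq, Qu] @ map Ctx cv"])
      (simp_all add: X split ps vs)
  moreover have "map fst ps = vs"
    using list_all2_lengthD[OF qs_VALS] by (simp add: ps_def)
  moreover have "v \<in> Vall \<and> q \<in> VALS v" if "(v, q) \<in> set ps" for v q
    using that qs_VALS wf(1) by (auto simp: ps_def list_all2_iff dest: set_zip_leftD)
  ultimately show ?thesis
    using that[of X cv ps cs] X split cs(2) by (simp add: mk_kshot_def ps)
qed

lemma test_correct_kshot:
  assumes "set_pmf D \<subseteq> {vs. test_list V E vs}" "0 < k"
    and "(inp, lab) \<in> set_pmf (data_pmf VALS CONT c V D k)"
    and logits: "\<And>i. i < length (expected_completion c inp) \<Longrightarrow>
      logit \<theta> (inp @ take i (expected_completion c inp)) =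
        (\<lambda>a. if a = correct_next c (inp @ take i (expected_completion c inp)) then 1 else 0)"
  shows "test_correct (alphabet Vall VALS CONT) \<theta> inp lab"
proof -
  obtain vs ss where "vs \<in> set_pmf D"
    and ss: "length ss = Suc k" "set ss \<subseteq> set_pmf (proc_pmf VALS CONT c V vs)"
    and x: "(inp, lab) = mk_kshot (take k ss) (ss ! k)"
    by (rule data_pmf_sample[OF assms(3)])
  then have test: "test_list V E vs"
    using assms(1) by blast
  obtain X cv ps cs
    where inp: "inp = X @ Dlm # [Vert (last vs), Eq, Qu] @ map Ctx cv @ take 4 (render ps)"
    and lab: "lab = join_comma (map block (zip (tl ps) cs))" and ps: "map fst ps = vs"
    and cs: "length cs = length (tl ps)"
    and vals: "\<And>v q. (v, q) \<in> set ps \<Longrightarrow> v \<in> Vall \<and> q \<in> VALS v"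
    and out: "expected_completion c inp = render (tl ps)"
    by (rule test_kshot_shape[OF test assms(2) ss]) (simp_all flip: x)
  define P where "P = X @ Dlm # [Vert (last vs), Eq, Qu] @ map Ctx cv"
  have "vs \<noteq> []"
    using test by (simp add: test_list_def is_chain_def)
  then have ne: "ps \<noteq> []"
    using ps by auto
  then have last: "fst (last ps) = last vs"
    using ps by (auto simp: last_map)
  have "Dlm \<notin> set ([Vert (last vs), Eq, Qu] @ map Ctx cv @ take 4 (render ps))"
    using Dlm_notin_render by (auto dest: in_set_takeD)
  then have hd_cur: "hd (cur_seq (P @ take 4 (render ps))) = Vert (fst (last ps))"
    by (simp add: P_def last cur_seq_append_Dlm)
  have distinct: "fst (ps ! j) \<noteq> fst (last ps)" if "Suc j < length ps" for j
    using test_list_nth_neq_last[OF finite_chains test, of j] that ps last by auto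
  have inp_P: "inp = P @ take 4 (render ps)"
    by (simp add: inp P_def)
  have "logit \<theta> (inp @ take i (render (tl ps))) = (\<lambda>a. if a = render (tl ps) ! i then 1 else 0)"
    if "i < length (render (tl ps) :: ('v, 'c) token list)" for i
    using logits[of i] correct_next_render[OF inp out that] that by (simp add: out)
  moreover have "set (render (tl ps)) \<subseteq> alphabet Vall VALS CONT"
    using vals list.set_sel(2)[OF ne] by (intro set_render_subset_alphabet) blast
  ultimately have "greedy_run (alphabet Vall VALS CONT) \<theta> inp out' \<longleftrightarrow> out' = render (tl ps)" for out'
    using greedy_run_iff[OF finite_alphabet _ _ stops_render[OF ne hd_cur, folded inp_P]
        not_stops_render_prefix[OF hd_cur distinct, folded inp_P]] by blast
  moreover have "dec (render (tl ps)) = dec lab"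
    using cs by (simp add: lab dec_render dec_join_comma dec_block comp_def)
  ultimately show ?thesis
    by (simp add: test_correct_def)
qed

definition train_queries :: "nat \<Rightarrow> 'v list pmf \<Rightarrow> ('v, 'c) token list set" where
  "train_queries K D = {inp @ take t lab | k inp lab t.
     k \<in> {1..<K} \<and> (inp, lab) \<in> set_pmf (data_pmf VALS CONT c V D k) \<and> t \<in> {1..<length lab}}"

definition test_queries :: "nat \<Rightarrow> 'v list pmf \<Rightarrow> ('v, 'c) token list set" where
  "test_queries K D = {inp @ take i (expected_completion c inp) | k inp lab i.
     k \<in> {2..K} \<and> (inp, lab) \<in> set_pmf (data_pmf VALS CONT c V D k) \<and> i < length (expected_completion c inp)}"

lemma finite_set_data_pmf_Vall:
  "finite (set_pmf D) \<Longrightarrow> (\<And>vs. vs \<in> set_pmf D \<Longrightarrow> set vs \<subseteq> Vall) \<Longrightarrow>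
    finite (set_pmf (data_pmf VALS CONT c V D k))"
  using VALS_CONT_finite_nonempty by (intro finite_set_data_pmf) blast+

lemma finite_train_queries:
  assumes "finite (set_pmf D)" "set_pmf D \<subseteq> {vs. train_list Vall V E vs}"
  shows "finite (train_queries K D)"
proof -
  have "train_queries K D \<subseteq> (\<Union>k\<in>{1..<K}. \<Union>x\<in>set_pmf (data_pmf VALS CONT c V D k).
      (\<lambda>t. fst x @ take t (snd x)) ` {..<length (snd x)})"
  proof
    fix z assume "z \<in> train_queries K D"
    then obtain k inp lab t where z: "z = inp @ take t lab" "t \<in> {1..<length lab}"
      and k: "k \<in> {1..<K}" and x: "(inp, lab) \<in> set_pmf (data_pmf VALS CONT c V D k)"
      unfolding train_queries_def by blast
    show "z \<in> (\<Union>k\<in>{1..<K}. \<Union>x\<in>set_pmf (data_pmf VALS CONT c V D k).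
        (\<lambda>t. fst x @ take t (snd x)) ` {..<length (snd x)})"
      by (rule UN_I[OF k], rule UN_I[OF x]) (use z in auto)
  qed
  moreover have "finite (set_pmf (data_pmf VALS CONT c V D k))" for k
    using assms by (intro finite_set_data_pmf_Vall) (auto simp: train_list_def)
  then have "finite (\<Union>k\<in>{1..<K}. \<Union>x\<in>set_pmf (data_pmf VALS CONT c V D k).
      (\<lambda>t. fst x @ take t (snd x)) ` {..<length (snd x)})"
    by (intro finite_UN_I finite_imageI) simp_all
  ultimately show ?thesis
    by (rule finite_subset)
qed

lemma finite_test_queries:
  assumes "set_pmf D \<subseteq> {vs. test_list V E vs}"
  shows "finite (test_queries K D)"
proof -
  have "test_queries K D \<subseteq> (\<Union>k\<in>{2..K}. \<Union>x\<in>set_pmf (data_pmf VALS CONT c V D k).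
      (\<lambda>i. fst x @ take i (expected_completion c (fst x))) ` {..<length (expected_completion c (fst x))})"
  proof
    fix z assume "z \<in> test_queries K D"
    then obtain k inp lab i where z: "z = inp @ take i (expected_completion c inp)"
      "i < length (expected_completion c inp)"
      and k: "k \<in> {2..K}" and x: "(inp, lab) \<in> set_pmf (data_pmf VALS CONT c V D k)"
      unfolding test_queries_def by blast
    show "z \<in> (\<Union>k\<in>{2..K}. \<Union>x\<in>set_pmf (data_pmf VALS CONT c V D k).
        (\<lambda>i. fst x @ take i (expected_completion c (fst x))) ` {..<length (expected_completion c (fst x))})"
      by (rule UN_I[OF k], rule UN_I[OF x]) (use z in auto)
  qed
  moreover have "finite (set_pmf D)"
    using assms finite_chains by (auto simp: chains_def test_list_def intro: finite_subset)
  then have "finite (set_pmf (data_pmf VALS CONT c V D k))" for k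
    using assms V_subset_Vall by (intro finite_set_data_pmf_Vall) (auto simp: test_list_def is_chain_def)
  then have "finite (\<Union>k\<in>{2..K}. \<Union>x\<in>set_pmf (data_pmf VALS CONT c V D k).
      (\<lambda>i. fst x @ take i (expected_completion c (fst x))) ` {..<length (expected_completion c (fst x))})"
    by (intro finite_UN_I finite_imageI) simp_all
  ultimately show ?thesis
    by (rule finite_subset)
qed

lemma Nil_notin_queries: "[] \<notin> train_queries K D" "[] \<notin> test_queries K D"
  by (auto simp: train_queries_def test_queries_def dest: input_data_pmf_ne)

lemma train_test_queries_disjoint:
  assumes "set_pmf Dtr \<subseteq> {vs. train_list Vall V E vs}" "set_pmf Dte \<subseteq> {vs. test_list V E vs}"
  shows "train_queries K Dtr \<inter> test_queries K' Dte = {}"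
proof -
  have "first_shot_vertices z \<in> set_pmf Dtr" if "z \<in> train_queries K Dtr" for z
    using that by (auto simp: train_queries_def dest: first_shot_vertices_data_pmf)
  moreover have "first_shot_vertices z \<in> set_pmf Dte" if "z \<in> test_queries K' Dte" for z
    using that by (auto simp: test_queries_def dest: first_shot_vertices_data_pmf)
  moreover have "\<not> (train_list Vall V E vs \<and> test_list V E vs)" for vs
  proof
    assume "train_list Vall V E vs \<and> test_list V E vs"
    then have "filter (\<lambda>v. v \<in> V) vs = vs" "length (filter (\<lambda>v. v \<in> V) vs) < maxlen V E"
      "length vs = maxlen V E"
      by (auto simp: train_list_def test_list_def is_chain_def filter_id_conv)
    then show False
      by simp
  qed
  ultimately show ?thesis
    using assms by blast
qed

lemma train_loss_nonneg:
  assumes "set_pmf D \<subseteq> {vs. train_list Vall V E vs}"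
  shows "0 \<le> train_loss Vall VALS CONT c V K D \<theta>"
proof -
  have "0 \<le> seq_loss (alphabet Vall VALS CONT) \<theta> inp lab"
    if "(inp, lab) \<in> set_pmf (data_pmf VALS CONT c V D k)" for inp lab k
    using set_label_subset_alphabet[OF that assms] by (intro seq_loss_nonneg finite_alphabet) simp
  then show ?thesis
    unfolding train_loss_def by (intro sum_nonneg integral_nonneg_AE AE_pmfI) auto
qed

lemma train_loss_eq_if_queries:
  "(\<And>z. z \<in> train_queries K D \<Longrightarrow> logit \<theta> z = logit \<theta>' z) \<Longrightarrow>
    train_loss Vall VALS CONT c V K D \<theta> = train_loss Vall VALS CONT c V K D \<theta>'"
  by (rule train_loss_cong) (unfold train_queries_def, blast)

lemma test_loss_eq_minus_one:
  assumes "set_pmf D \<subseteq> {vs. test_list V E vs}" "k \<in> {2..K}"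
    and "\<And>z. z \<in> test_queries K D \<Longrightarrow> logit \<theta> z = (\<lambda>a. if a = correct_next c z then 1 else 0)"
  shows "test_loss Vall VALS CONT c V D k \<theta> = -1"
proof -
  have "test_correct (alphabet Vall VALS CONT) \<theta> inp lab"
    if "(inp, lab) \<in> set_pmf (data_pmf VALS CONT c V D k)" for inp lab
    using assms(2) that
    by (intro test_correct_kshot[OF assms(1) _ that] assms(3)) (auto simp: test_queries_def)
  then have "measure_pmf.prob (data_pmf VALS CONT c V D k)
      {(inp, lab). test_correct (alphabet Vall VALS CONT) \<theta> inp lab} = 1"
    by (subst measure_pmf.prob_eq_1) (auto intro!: AE_pmfI)
  then show ?thesis
    by (simp add: test_loss_def)
qed

end

theorem theorem1:
  fixes Vall V :: "'v set" and E :: "('v \<times> 'v) set"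
    and VALS :: "'v \<Rightarrow> int set" and CONT :: "'v \<Rightarrow> 'c set" and c :: "'v \<times> 'v \<Rightarrow> int"
    and K :: nat and Dtr Dte :: "'v list pmf" and \<epsilon> :: real
  assumes "valid_structure Vall V E VALS CONT c"
    and "set_pmf Dtr \<subseteq> {vs. train_list Vall V E vs}" and "finite (set_pmf Dtr)"
    and "set_pmf Dte \<subseteq> {vs. test_list V E vs}"
    and "\<epsilon> > 0"
  shows "\<exists>\<theta>::('v, 'c) tparams.
           \<bar>train_loss Vall VALS CONT c V K Dtr \<theta>
              - (INF \<theta>'. train_loss Vall VALS CONT c V K Dtr \<theta>')\<bar> < \<epsilon> \<and>
           (\<forall>k\<in>{2..K}. test_loss Vall VALS CONT c V Dte k \<theta> = -1)"
proof -
  interpret causal_structure Vall V E VALS CONT c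
    by unfold_locales (fact assms(1))
  let ?L = "train_loss Vall VALS CONT c V K Dtr"
  have "bdd_below (range ?L)"
    using train_loss_nonneg[OF assms(2)] by (intro bdd_belowI2)
  then obtain \<theta>\<^sub>0 :: "('v, 'c) tparams" where \<theta>\<^sub>0: "\<bar>?L \<theta>\<^sub>0 - (INF \<theta>. ?L \<theta>)\<bar> < \<epsilon>"
    using exists_near_INF assms(5) by blast
  define h where "h z = (if z \<in> train_queries K Dtr then logit \<theta>\<^sub>0 z
    else (\<lambda>a. if a = correct_next c z then 1 else 0))" for z
  obtain \<theta> :: "('v, 'c) tparams"
    where \<theta>: "\<forall>z\<in>train_queries K Dtr \<union> test_queries K Dte. logit \<theta> z = h z"
    using transformer_memorization[of "train_queries K Dtr \<union> test_queries K Dte" h]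
      finite_train_queries[OF assms(3,2)] finite_test_queries[OF assms(4)] Nil_notin_queries
    by blast
  have train: "?L \<theta> = ?L \<theta>\<^sub>0"
    using \<theta> by (intro train_loss_eq_if_queries) (simp add: h_def)
  have test: "test_loss Vall VALS CONT c V Dte k \<theta> = -1" if "k \<in> {2..K}" for k
  proof (rule test_loss_eq_minus_one[OF assms(4) that])
    fix z assume "z \<in> test_queries K Dte"
    moreover from this have "z \<notin> train_queries K Dtr"
      using train_test_queries_disjoint[OF assms(2,4)] by blast
    ultimately show "logit \<theta> z = (\<lambda>a. if a = correct_next c z then 1 else 0)"
      using \<theta> by (simp add: h_def)
  qed
  show ?thesis
    by (rule exI[of _ \<theta>]) (use \<theta>\<^sub>0 train test in simp)
qed

end
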